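(* Let $F_t>0$, $\sigma_t>0$, $h>0$, $\nu>0$, $-1<\rho<1$, $\rho_\ast=\sqrt{1-\rho^2}$. Let $Z$ be a standard Brownian motion, $\sigma_{t+h}=\sigma_t\exp(\nu Z_h-\nu^2h/2)$, and let $I>0$ be any random variable (jointly distributed with $\sigma_{t+h}$). Put $V=\rho_\ast^2\sigma_t^2hI$ and $a=F_t+\frac{\rho}{\nu}(\sigma_{t+h}-\sigma_t)$. Suppose $F_{t+h}\ge0$ is a random variable whose conditional law given $(\sigma_{t+h},I)$ satisfies, for all $y>0$, $$\mathrm{Prob}(F_{t+h}\ge y\mid\sigma_{t+h},I)=P_{\chi^2}\!\left(\frac{a^2}{V};\,1,\,\frac{y^2}{V}\right).$$ Then $E[F_{t+h}\mid\sigma_{t+h},I]=|a|$, and consequently $E[F_{t+h}]\ge F_t$.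
   Context: $P_{\chi^2}(x;\delta,r)=\int_0^x f_{\chi^2}(u;\delta,r)\,\mathrm{d}u$ is the distribution function of the noncentral chi-squared law with $\delta$ degrees of freedom and noncentrality $r$, evaluated at $x$, where $f_{\chi^2}(x;\delta,r)=\frac12(x/r)^{\alpha/2}I_\alpha(\sqrt{xr})e^{-(x+r)/2}$ with $\alpha=\delta/2-1$ and $I_\alpha$ the modified Bessel function of the first kind. The displayed conditional law is Islah's approximation of the SABR conditional forward price specialized to $\beta=0$. *)

theory Defs
  imports "HOL-Probability.Probability"
begin

definition bessel_I :: "real \<Rightarrow> real \<Rightarrow> real" where
  "bessel_I \<alpha> z = (\<Sum>k. (z / 2) powr (2 * real k + \<alpha>) / (fact k * Gamma (real k + \<alpha> + 1)))"

text \<open>Density of the noncentral chi-squared law with delta degrees of freedom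
  and noncentrality r, as in the paper (alpha = delta/2 - 1).\<close>
definition chi2_density :: "real \<Rightarrow> real \<Rightarrow> real \<Rightarrow> real" where
  "chi2_density x \<delta> r =
     (let \<alpha> = \<delta> / 2 - 1 in
      1/2 * (x / r) powr (\<alpha> / 2) * bessel_I \<alpha> (sqrt (x * r)) * exp (- (x + r) / 2))"

definition P_chi2 :: "real \<Rightarrow> real \<Rightarrow> real \<Rightarrow> real" where
  "P_chi2 x \<delta> r = (LBINT u=0..x. chi2_density u \<delta> r)"

end

theory Submission
  imports Defs
begin

text \<open>For one degree of freedom the Bessel function is elementary,
  I_{-1/2}(z) = sqrt(2/(pi z)) cosh z, and f_chi2(u; 1, y^2/V), viewed as a function of y, is
  sqrt V / (2 sqrt u) times the sum of the normal densities with means +-sqrt(u V) and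
  variance V. Integrating the conditional tail P_chi2(a^2/V; 1, y^2/V) over y > 0 and
  exchanging the integrals thus gives the integral of sqrt V / (2 sqrt u) over
  0 < u < a^2/V, which is |a|. Finally exp(nu Z_h - nu^2 h/2) has mean one, so a has
  mean F_t and E|a| >= E a = F_t.\<close>

lemma Gamma_nat_plus_half: "Gamma (real k + 1/2) = sqrt pi * fact (2*k) / (4^k * fact k)"
proof (induction k)
  case 0
  then show ?case by (simp add: Gamma_one_half_real)
next
  case (Suc k)
  have "Gamma (real (Suc k) + 1/2) = Gamma ((real k + 1/2) + 1)"
    by (simp add: algebra_simps)
  also have "\<dots> = (real k + 1/2) * Gamma (real k + 1/2)"
    by (rule Gamma_plus1) (use nonpos_Ints_nonpos in force)
  also have "\<dots> = sqrt pi * ((2*real k+2) * (2*real k+1) * fact (2*k)) / (4 * 4^k * ((real k+1) * fact k))"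
    unfolding Suc.IH by (simp add: divide_simps add_pos_pos) (simp add: algebra_simps)
  also have "\<dots> = sqrt pi * fact (2 * Suc k) / (4 ^ Suc k * fact (Suc k))"
    by (simp add: fact_Suc algebra_simps)
  finally show ?case .
qed

lemma cosh_sums_even: "(\<lambda>k. (z::real) ^ (2*k) / fact (2*k)) sums cosh z"
proof -
  have "(\<lambda>k. (\<lambda>n. if even n then z ^ n /\<^sub>R fact n else 0) (2*k)) sums cosh z"
    by (subst sums_mono_reindex) (auto simp: strict_mono_def cosh_converges elim!: evenE)
  then show ?thesis by (simp add: divide_inverse mult.commute)
qed

lemma bessel_I_minus_half:
  assumes z: "z > 0"
  shows "bessel_I (-1/2) z = sqrt (2 / (pi * z)) * cosh z"
proof -
  have term_eq: "(z/2) powr (2 * real k + -1/2) / (fact k * Gamma (real k + -1/2 + 1))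
      = ((z/2) powr (-1/2) / sqrt pi) * (z ^ (2*k) / fact (2*k))" for k
  proof -
    have "(z/2) powr (2 * real k) = (z/2) ^ (2*k)"
      using z powr_realpow[of "z/2" "2*k"] by simp
    then have "(z/2) powr (2 * real k + -1/2) = (z/2) powr (-1/2) * (z ^ (2*k) / 4 ^ k)"
      using powr_add[of "z/2" "2 * real k" "-1/2"] by (simp add: power_divide power_mult)
    moreover have "Gamma (real k + -1/2 + 1) = sqrt pi * fact (2*k) / (4^k * fact k)"
      using Gamma_nat_plus_half[of k] by (simp add: algebra_simps)
    ultimately show ?thesis by simp
  qed
  have "(\<lambda>k. (z/2) powr (2 * real k + -1/2) / (fact k * Gamma (real k + -1/2 + 1)))
        sums ((z/2) powr (-1/2) / sqrt pi * cosh z)"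
    unfolding term_eq by (intro sums_mult cosh_sums_even)
  then have "bessel_I (-1/2) z = (z/2) powr (-1/2) / sqrt pi * cosh z"
    unfolding bessel_I_def by (rule sums_unique[symmetric])
  also have "(z/2) powr (-1/2) / sqrt pi = sqrt (2 / (pi * z))"
    using z by (simp add: powr_minus_divide powr_half_sqrt real_sqrt_divide real_sqrt_mult field_simps)
  finally show ?thesis .
qed

definition chi2_one_density :: "real \<Rightarrow> real \<Rightarrow> real" where
  "chi2_one_density u r = exp (-(u + r)/2) * cosh (sqrt (u * r)) / sqrt (2 * pi * u)"

lemma chi2_one_density_nonneg: "u \<ge> 0 \<Longrightarrow> chi2_one_density u r \<ge> 0"
  unfolding chi2_one_density_def by simp

lemma measurable_chi2_one_density [measurable (raw)]:
  assumes [measurable]: "f \<in> borel_measurable M" "g \<in> borel_measurable M"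
  shows "(\<lambda>x. chi2_one_density (f x) (g x)) \<in> borel_measurable M"
  unfolding chi2_one_density_def cosh_field_def by measurable

lemma chi2_density_one_eq:
  assumes u: "u > 0" and r: "r > 0"
  shows "chi2_density u 1 r = chi2_one_density u r"
proof -
  have sqrt_powr: "sqrt x = x powr (1/2)" if "x \<ge> 0" for x :: real
    using that by (simp add: powr_half_sqrt)
  have "(u / r) powr (-1/4) * sqrt (2 / (pi * sqrt (u * r)))
      = (2 / pi) powr (1/2) * (u powr (-1/4) * u powr (-1/4))"
    using u r by (simp add: sqrt_powr powr_divide powr_mult powr_powr powr_minus field_simps)
  also have "\<dots> = 2 / sqrt (2 * pi * u)"
    using u by (simp add: powr_add[symmetric] sqrt_powr[symmetric] powr_minus_divide
        real_sqrt_divide real_sqrt_mult field_simps)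
  finally have "1/2 * (u / r) powr (-1/4) * sqrt (2 / (pi * sqrt (u * r))) = 1 / sqrt (2 * pi * u)"
    by simp
  moreover have "chi2_density u 1 r = 1/2 * (u / r) powr (-1/4)
      * sqrt (2 / (pi * sqrt (u * r))) * cosh (sqrt (u * r)) * exp (- (u + r) / 2)"
    using u r bessel_I_minus_half[of "sqrt (u * r)"] by (simp add: chi2_density_def)
  ultimately show ?thesis
    unfolding chi2_one_density_def by (simp add: field_simps)
qed

lemma chi2_one_density_normal_mixture:
  assumes u: "u > 0" and V: "V > 0"
  shows "chi2_one_density u (y\<^sup>2 / V) = sqrt V / (2 * sqrt u) *
     (normal_density (sqrt (u * V)) (sqrt V) y + normal_density (- sqrt (u * V)) (sqrt V) y)"
proof -
  define s where "s = sqrt (u / V)"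
  have s2: "s\<^sup>2 = u / V" and mean: "sqrt (u * V) = s * V"
    using u V by (simp_all add: s_def real_sqrt_mult real_sqrt_divide field_simps)
  have sqrt_ur: "sqrt (u * (y\<^sup>2 / V)) = \<bar>y\<bar> * s"
    using u V by (simp add: s_def real_sqrt_mult real_sqrt_divide)
  have cosh: "cosh (\<bar>y\<bar> * s) = (exp (y * s) + exp (-(y * s))) / 2"
    by (cases "y \<ge> 0") (simp_all add: cosh_def)
  define E where "E = exp (-(u + y\<^sup>2 / V) / 2)"
  have exp_plus: "exp (-(y - s * V)\<^sup>2 / (2 * V)) = E * exp (y * s)"
   and exp_minus: "exp (-(y - - (s * V))\<^sup>2 / (2 * V)) = E * exp (-(y * s))"
    unfolding E_def exp_add[symmetric] using V s2 by (simp_all add: power2_eq_square field_simps)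
  have "sqrt V / (2 * sqrt u) *
     (normal_density (sqrt (u * V)) (sqrt V) y + normal_density (- sqrt (u * V)) (sqrt V) y)
     = sqrt V / (2 * sqrt u) * (1 / sqrt (2 * pi * V)) * (E * exp (y * s) + E * exp (-(y * s)))"
    unfolding normal_density_def mean real_sqrt_pow2[OF less_imp_le[OF V]] exp_plus exp_minus
    by (simp add: algebra_simps add_divide_distrib)
  also have "\<dots> = chi2_one_density u (y\<^sup>2 / V)"
    unfolding chi2_one_density_def sqrt_ur cosh E_def using u V
    by (simp add: real_sqrt_mult field_simps)
  finally show ?thesis ..
qed

lemma nn_integral_pos_normal_density_reflect:
  assumes "\<sigma> > 0"
  shows "(\<integral>\<^sup>+ y. indicator {0<..} y * ennreal (normal_density m \<sigma> y) \<partial>lborel)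
       + (\<integral>\<^sup>+ y. indicator {0<..} y * ennreal (normal_density (-m) \<sigma> y) \<partial>lborel) = 1"
proof -
  have "(\<integral>\<^sup>+ y. indicator {0<..} y * ennreal (normal_density (-m) \<sigma> y) \<partial>lborel)
      = ennreal \<bar>-1::real\<bar> * (\<integral>\<^sup>+ y. indicator {0<..} (0 + -1 * y)
          * ennreal (normal_density (-m) \<sigma> (0 + -1 * y)) \<partial>lborel)"
    by (rule nn_integral_real_affine) auto
  also have "\<dots> = (\<integral>\<^sup>+ y. indicator {..<0} y * ennreal (normal_density m \<sigma> y) \<partial>lborel)"
    by (simp, intro nn_integral_cong) (auto simp: normal_density_def indicator_def power2_commute)
  finally have reflect: "(\<integral>\<^sup>+ y. indicator {0<..} y * ennreal (normal_density (-m) \<sigma> y) \<partial>lborel)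
     = (\<integral>\<^sup>+ y. indicator {..<0} y * ennreal (normal_density m \<sigma> y) \<partial>lborel)" .
  have "(\<integral>\<^sup>+ y. indicator {0<..} y * ennreal (normal_density m \<sigma> y) \<partial>lborel)
       + (\<integral>\<^sup>+ y. indicator {..<0} y * ennreal (normal_density m \<sigma> y) \<partial>lborel)
     = (\<integral>\<^sup>+ y. indicator {0<..} y * ennreal (normal_density m \<sigma> y)
          + indicator {..<0} y * ennreal (normal_density m \<sigma> y) \<partial>lborel)"
    by (rule nn_integral_add[symmetric]) auto
  also have "\<dots> = (\<integral>\<^sup>+ y. ennreal (normal_density m \<sigma> y) \<partial>lborel)"
    by (intro nn_integral_cong_AE, use AE_lborel_singleton[of 0] in eventually_elim)
       (auto simp: indicator_def)
  also have "\<dots> = 1"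
    using assms by (simp add: nn_integral_eq_integral)
  finally show ?thesis unfolding reflect .
qed

lemma nn_integral_chi2_one_density_noncentrality:
  assumes u: "u > 0" and V: "V > 0"
  shows "(\<integral>\<^sup>+ y. indicator {0<..} y * ennreal (chi2_one_density u (y\<^sup>2 / V)) \<partial>lborel)
       = ennreal (sqrt V / (2 * sqrt u))"
proof -
  define K where "K = sqrt V / (2 * sqrt u)"
  have "K \<ge> 0"
    using u V by (simp add: K_def)
  have "(\<integral>\<^sup>+ y. indicator {0<..} y * ennreal (chi2_one_density u (y\<^sup>2 / V)) \<partial>lborel)
     = (\<integral>\<^sup>+ y. ennreal K * (indicator {0<..} y * ennreal (normal_density (sqrt (u * V)) (sqrt V) y)
          + indicator {0<..} y * ennreal (normal_density (- sqrt (u * V)) (sqrt V) y)) \<partial>lborel)"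
    unfolding chi2_one_density_normal_mixture[OF u V] K_def[symmetric] using \<open>K \<ge> 0\<close>
    by (intro nn_integral_cong) (simp add: ennreal_mult ennreal_plus distrib_left algebra_simps)
  also have "\<dots> = ennreal K"
    using nn_integral_pos_normal_density_reflect[of "sqrt V" "sqrt (u * V)"] V
    by (simp add: nn_integral_cmult nn_integral_add)
  finally show ?thesis
    by (simp add: K_def)
qed

lemma nn_integral_inverse_sqrt:
  assumes c: "c \<ge> 0"
  shows "(\<integral>\<^sup>+ u. indicator {0<..<c} u * ennreal (1 / sqrt u) \<partial>lborel) = ennreal (2 * sqrt c)"
proof -
  have "((\<lambda>x. x powr (-1/2)) has_integral (c powr (-1/2+1) / (-1/2+1))) {0..c}"
    by (rule has_integral_powr_from_0) (use c in auto)
  from nn_integral_has_integral_lebesgue'[OF _ this]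
  have "(\<integral>\<^sup>+ u. ennreal (u powr (-1/2)) * indicator {0..c} u \<partial>lborel)
      = ennreal (c powr (-1/2+1) / (-1/2+1))"
    by simp
  also have "c powr (-1/2+1) / (-1/2+1) = 2 * sqrt c"
    using c by (simp add: powr_half_sqrt)
  finally have "(\<integral>\<^sup>+ u. ennreal (u powr (-1/2)) * indicator {0..c} u \<partial>lborel) = ennreal (2 * sqrt c)" .
  moreover have "AE u in lborel. ennreal (u powr (-1/2)) * indicator {0..c} u
      = indicator {0<..<c} u * ennreal (1 / sqrt u)"
    using AE_lborel_singleton[of 0] AE_lborel_singleton[of c]
    by eventually_elim (auto simp: indicator_def powr_minus_divide powr_half_sqrt)
  ultimately show ?thesis
    by (simp add: nn_integral_cong_AE)
qed

lemma nn_integral_chi2_one_tail: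
  assumes c: "c \<ge> 0" and V: "V > 0"
  shows "(\<integral>\<^sup>+ y. indicator {0<..} y *
            (\<integral>\<^sup>+ u. indicator {0<..<c} u * ennreal (chi2_one_density u (y\<^sup>2 / V)) \<partial>lborel) \<partial>lborel)
       = ennreal (sqrt (c * V))"
proof -
  have lborel2: "pair_sigma_finite lborel lborel"
    by (simp add: pair_sigma_finite_def lborel.sigma_finite_measure_axioms)
  have "(\<integral>\<^sup>+ y. indicator {0<..} y *
            (\<integral>\<^sup>+ u. indicator {0<..<c} u * ennreal (chi2_one_density u (y\<^sup>2 / V)) \<partial>lborel) \<partial>lborel)
     = (\<integral>\<^sup>+ y. (\<integral>\<^sup>+ u. indicator {0<..} y * (indicator {0<..<c} u
            * ennreal (chi2_one_density u (y\<^sup>2 / V))) \<partial>lborel) \<partial>lborel)"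
    by (intro nn_integral_cong, subst nn_integral_cmult) auto
  also have "\<dots> = (\<integral>\<^sup>+ u. (\<integral>\<^sup>+ y. indicator {0<..} y * (indicator {0<..<c} u
            * ennreal (chi2_one_density u (y\<^sup>2 / V))) \<partial>lborel) \<partial>lborel)"
    by (rule pair_sigma_finite.Fubini'[OF lborel2]) measurable
  also have "\<dots> = (\<integral>\<^sup>+ u. ennreal (sqrt V / 2) * (indicator {0<..<c} u * ennreal (1 / sqrt u)) \<partial>lborel)"
  proof (intro nn_integral_cong)
    fix u :: real
    show "(\<integral>\<^sup>+ y. indicator {0<..} y * (indicator {0<..<c} u
            * ennreal (chi2_one_density u (y\<^sup>2 / V))) \<partial>lborel)
        = ennreal (sqrt V / 2) * (indicator {0<..<c} u * ennreal (1 / sqrt u))"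
    proof (cases "0 < u \<and> u < c")
      case True
      have "(\<integral>\<^sup>+ y. indicator {0<..} y * (indicator {0<..<c} u
            * ennreal (chi2_one_density u (y\<^sup>2 / V))) \<partial>lborel)
          = (\<integral>\<^sup>+ y. indicator {0<..} y * ennreal (chi2_one_density u (y\<^sup>2 / V)) \<partial>lborel)"
        using True by (intro nn_integral_cong) simp
      also have "\<dots> = ennreal (sqrt V / 2) * ennreal (1 / sqrt u)"
        using True V by (simp add: nn_integral_chi2_one_density_noncentrality ennreal_mult[symmetric])
      finally show ?thesis
        using True by simp
    qed (auto simp: indicator_def)
  qed
  also have "\<dots> = ennreal (sqrt (c * V))"
    using V c by (simp add: nn_integral_cmult nn_integral_inverse_sqrt ennreal_mult[symmetric] real_sqrt_mult)
  finally show ?thesis .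
qed

lemma P_chi2_one_eq_nn_integral:
  assumes c: "c \<ge> 0" and r: "r > 0"
  shows "ennreal (P_chi2 c 1 r) = (\<integral>\<^sup>+ u. indicator {0<..<c} u * ennreal (chi2_one_density u r) \<partial>lborel)"
proof -
  define K where "K = cosh (sqrt (c * r)) / sqrt (2 * pi)"
  have bound: "indicator {0<..<c} u * ennreal (chi2_one_density u r)
      \<le> ennreal K * (indicator {0<..<c} u * ennreal (1 / sqrt u))" for u
  proof (cases "0 < u \<and> u < c")
    case True
    have "chi2_one_density u r
        = exp (-(u + r)/2) * cosh (sqrt (u * r)) / (sqrt (2 * pi) * sqrt u)"
      unfolding chi2_one_density_def by (simp add: real_sqrt_mult)
    also have "\<dots> \<le> 1 * cosh (sqrt (c * r)) / (sqrt (2 * pi) * sqrt u)"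
      using True r by (intro divide_right_mono mult_mono) (auto simp: cosh_real_nonneg_le_iff)
    finally show ?thesis
      using True by (simp add: K_def ennreal_mult[symmetric] ennreal_leI)
  qed auto
  have "(\<integral>\<^sup>+ u. indicator {0<..<c} u * ennreal (chi2_one_density u r) \<partial>lborel)
      \<le> (\<integral>\<^sup>+ u. ennreal K * (indicator {0<..<c} u * ennreal (1 / sqrt u)) \<partial>lborel)"
    by (intro nn_integral_mono bound)
  also have "\<dots> = ennreal K * ennreal (2 * sqrt c)"
    using c by (simp add: nn_integral_cmult nn_integral_inverse_sqrt)
  also have "\<dots> < \<infinity>"
    by (simp add: ennreal_mult_less_top)
  finally have finite: "(\<integral>\<^sup>+ u. indicator {0<..<c} u * ennreal (chi2_one_density u r) \<partial>lborel) < \<infinity>" .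
  have "P_chi2 c 1 r = (\<integral>u. indicator {0<..<c} u * chi2_one_density u r \<partial>lborel)"
    unfolding P_chi2_def interval_lebesgue_integral_def set_lebesgue_integral_def using c r
    by (auto intro!: Bochner_Integration.integral_cong
        simp: zero_ereal_def indicator_def chi2_density_one_eq)
  also have "\<dots> = enn2real (\<integral>\<^sup>+ u. indicator {0<..<c} u * ennreal (chi2_one_density u r) \<partial>lborel)"
    by (rule enn2real_nn_integral_eq_integral[symmetric])
       (auto simp: indicator_def chi2_one_density_nonneg)
  finally show ?thesis
    using finite by simp
qed

lemma subalgebra_vimage_algebra: "T \<in> M \<rightarrow>\<^sub>M N \<Longrightarrow> subalgebra M (vimage_algebra (space M) T N)"
  by (auto simp: subalgebra_def dest: sets_image_in_sets[OF refl])

lemma measurable_vimage_algebra_comp: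
  assumes "T \<in> X \<rightarrow> space N" and "f \<in> N \<rightarrow>\<^sub>M K"
  shows "(\<lambda>x. f (T x)) \<in> vimage_algebra X T N \<rightarrow>\<^sub>M K"
  using measurable_vimage_algebra1[OF assms(1)] assms(2) by (rule measurable_compose)

context sigma_finite_subalgebra
begin

lemma nn_cond_exp_eq_tail_integral:
  assumes [measurable]: "f \<in> borel_measurable M" and f_nonneg: "\<And>x. x \<in> space M \<Longrightarrow> 0 \<le> f x"
    and [measurable]: "case_prod S \<in> borel_measurable (M \<Otimes>\<^sub>M lborel)"
    and tail: "\<And>y. y > 0 \<Longrightarrow> AE x in M.
        nn_cond_exp M F (indicator {x \<in> space M. y \<le> f x}) x = S x y"
    and [measurable]: "g \<in> borel_measurable F"
    and g: "\<And>x. x \<in> space M \<Longrightarrow> (\<integral>\<^sup>+ y. indicator {0<..} y * S x y \<partial>lborel) = g x"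
  shows "AE x in M. nn_cond_exp M F (\<lambda>x. ennreal (f x)) x = g x"
proof -
  interpret pair_sigma_finite M lborel
    by (simp add: pair_sigma_finite_def lborel.sigma_finite_measure_axioms sigma_finite_measure_axioms)
  have "(\<integral>\<^sup>+ x \<in> A. f x \<partial>M) = (\<integral>\<^sup>+ x \<in> A. g x \<partial>M)" if A: "A \<in> sets F" for A
  proof -
    have [measurable]: "A \<in> sets M"
      using A subalg by (auto simp: subalgebra_def)
    have layer_cake: "ennreal (f x) * indicator A x
        = (\<integral>\<^sup>+ y. indicator A x * (indicator {0<..} y * (if y \<le> f x then 1 else 0)) \<partial>lborel)"
      if "x \<in> space M" for x
    proof -
      have "(\<integral>\<^sup>+ y. indicator A x * (indicator {0<..} y * (if y \<le> f x then 1 else 0)) \<partial>lborel)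
          = indicator A x * (\<integral>\<^sup>+ y. indicator {0<..f x} y \<partial>lborel)"
        by (subst nn_integral_cmult[symmetric]) (auto intro!: nn_integral_cong simp: indicator_def)
      then show ?thesis
        using f_nonneg[OF that] by (simp add: mult.commute)
    qed
    have tail_A: "(\<integral>\<^sup>+ x. indicator A x * (indicator {0<..} y * (if y \<le> f x then 1 else 0)) \<partial>M)
        = (\<integral>\<^sup>+ x. indicator A x * (indicator {0<..} y * S x y) \<partial>M)" for y
    proof (cases "y > 0")
      case False
      then show ?thesis by simp
    next
      case True
      have "(\<integral>\<^sup>+ x. indicator A x * (indicator {0<..} y * (if y \<le> f x then 1 else 0)) \<partial>M)
          = (\<integral>\<^sup>+ x. indicator A x * indicator {x \<in> space M. y \<le> f x} x \<partial>M)"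
        using True by (intro nn_integral_cong) (auto simp: indicator_def)
      also have "\<dots> = (\<integral>\<^sup>+ x. indicator A x * nn_cond_exp M F (indicator {x \<in> space M. y \<le> f x}) x \<partial>M)"
        using A by (intro nn_cond_exp_intg[symmetric]) auto
      also have "\<dots> = (\<integral>\<^sup>+ x. indicator A x * (indicator {0<..} y * S x y) \<partial>M)"
        using tail[OF True] True by (intro nn_integral_cong_AE) auto
      finally show ?thesis .
    qed
    have "(\<integral>\<^sup>+ x \<in> A. f x \<partial>M)
        = (\<integral>\<^sup>+ x. (\<integral>\<^sup>+ y. indicator A x * (indicator {0<..} y * (if y \<le> f x then 1 else 0)) \<partial>lborel) \<partial>M)"
      by (intro nn_integral_cong) (simp add: layer_cake)
    also have "\<dots> = (\<integral>\<^sup>+ y. (\<integral>\<^sup>+ x. indicator A x * (indicator {0<..} y * (if y \<le> f x then 1 else 0)) \<partial>M) \<partial>lborel)"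
      by (rule Fubini'[symmetric]) measurable
    also have "\<dots> = (\<integral>\<^sup>+ y. (\<integral>\<^sup>+ x. indicator A x * (indicator {0<..} y * S x y) \<partial>M) \<partial>lborel)"
      by (simp add: tail_A)
    also have "\<dots> = (\<integral>\<^sup>+ x. (\<integral>\<^sup>+ y. indicator A x * (indicator {0<..} y * S x y) \<partial>lborel) \<partial>M)"
      by (rule Fubini') measurable
    also have "\<dots> = (\<integral>\<^sup>+ x \<in> A. g x \<partial>M)"
      by (intro nn_integral_cong) (simp add: nn_integral_cmult g, simp add: mult.commute)
    finally show ?thesis .
  qed
  then show ?thesis
    using nn_cond_exp_charact[of "\<lambda>x. ennreal (f x)" g] by auto
qed

lemma nn_cond_exp_eq_abs_if_chi2_one_tail:
  assumes [measurable]: "f \<in> borel_measurable M" and f_nonneg: "\<And>x. x \<in> space M \<Longrightarrow> 0 \<le> f x"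
    and [measurable]: "a \<in> borel_measurable F" "V \<in> borel_measurable M"
    and V_pos: "\<And>x. x \<in> space M \<Longrightarrow> V x > 0"
    and tail: "\<And>y. y > 0 \<Longrightarrow> AE x in M. nn_cond_exp M F (indicator {x \<in> space M. y \<le> f x}) x
        = ennreal (P_chi2 ((a x)\<^sup>2 / V x) 1 (y\<^sup>2 / V x))"
  shows "AE x in M. nn_cond_exp M F (\<lambda>x. ennreal (f x)) x = ennreal \<bar>a x\<bar>"
proof (rule nn_cond_exp_eq_tail_integral[OF _ f_nonneg])
  have [measurable]: "a \<in> borel_measurable M"
    using subalg by (simp add: measurable_from_subalg)
  let ?S = "\<lambda>x y. \<integral>\<^sup>+ u. indicator {0<..<(a x)\<^sup>2 / V x} u * ennreal (chi2_one_density u (y\<^sup>2 / V x)) \<partial>lborel"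
  show "case_prod ?S \<in> borel_measurable (M \<Otimes>\<^sub>M lborel)"
    unfolding indicator_def greaterThanLessThan_iff by measurable
  show "AE x in M. nn_cond_exp M F (indicator {x \<in> space M. y \<le> f x}) x = ?S x y" if "y > 0" for y
    using tail[OF that] AE_space
  proof eventually_elim
    case (elim x)
    with V_pos[of x] that show ?case
      by (simp add: P_chi2_one_eq_nn_integral)
  qed
  show "(\<integral>\<^sup>+ y. indicator {0<..} y * ?S x y \<partial>lborel) = ennreal \<bar>a x\<bar>" if "x \<in> space M" for x
    using V_pos[OF that] by (simp add: nn_integral_chi2_one_tail)
qed measurable

end

lemma (in prob_space) nn_integral_abs_affine_ge:
  assumes [measurable]: "X \<in> borel_measurable M" and X_nonneg: "\<And>x. x \<in> space M \<Longrightarrow> 0 \<le> X x"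
    and mean: "(\<integral>\<^sup>+ x. X x \<partial>M) = 1"
  shows "ennreal (c + b) \<le> (\<integral>\<^sup>+ x. ennreal \<bar>c + b * X x\<bar> \<partial>M)"
proof -
  have X: "integrable M X"
    using mean X_nonneg by (intro integrableI_nn_integral_finite[where x = 1]) auto
  then have "expectation X = 1"
    using nn_integral_eq_integral[OF X] mean X_nonneg by simp
  then have "ennreal (c + b) \<le> ennreal \<bar>expectation (\<lambda>x. c + b * X x)\<bar>"
    using X by (simp add: prob_space ennreal_leI)
  also have "\<dots> \<le> (\<integral>\<^sup>+ x. ennreal \<bar>c + b * X x\<bar> \<partial>M)"
    using integral_norm_bound_ennreal[of M "\<lambda>x. c + b * X x"] X by simp
  finally show ?thesis .
qed

lemma nn_integral_exp_normal_eq_1: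
  assumes Z: "distributed M lborel Z (normal_density 0 \<sigma>)" and \<sigma>: "\<sigma> > 0"
  shows "(\<integral>\<^sup>+ x. ennreal (exp (\<nu> * Z x - \<nu>\<^sup>2 * \<sigma>\<^sup>2 / 2)) \<partial>M) = 1"
proof -
  have tilt: "normal_density 0 \<sigma> z * exp (\<nu> * z - \<nu>\<^sup>2 * \<sigma>\<^sup>2 / 2) = normal_density (\<nu> * \<sigma>\<^sup>2) \<sigma> z" for z
  proof -
    have "-(z - 0)\<^sup>2 / (2 * \<sigma>\<^sup>2) + (\<nu> * z - \<nu>\<^sup>2 * \<sigma>\<^sup>2 / 2) = -(z - \<nu> * \<sigma>\<^sup>2)\<^sup>2 / (2 * \<sigma>\<^sup>2)"
      using \<sigma> by (simp add: power2_eq_square field_simps)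
    then show ?thesis
      unfolding normal_density_def by (simp add: exp_add[symmetric])
  qed
  have "(\<integral>\<^sup>+ x. ennreal (exp (\<nu> * Z x - \<nu>\<^sup>2 * \<sigma>\<^sup>2 / 2)) \<partial>M)
      = (\<integral>\<^sup>+ z. ennreal (normal_density 0 \<sigma> z) * ennreal (exp (\<nu> * z - \<nu>\<^sup>2 * \<sigma>\<^sup>2 / 2)) \<partial>lborel)"
    by (rule distributed_nn_integral[OF Z, symmetric]) simp
  also have "\<dots> = (\<integral>\<^sup>+ z. ennreal (normal_density (\<nu> * \<sigma>\<^sup>2) \<sigma> z) \<partial>lborel)"
    by (simp add: tilt ennreal_mult[symmetric])
  also have "\<dots> = 1"
    using \<sigma> by (simp add: nn_integral_eq_integral)
  finally show ?thesis .
qed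

theorem mainTheorem6:
  fixes M :: "'a measure"
    and Ft \<sigma>t h \<nu> \<rho> :: real
    and Z I F :: "'a \<Rightarrow> real"
  assumes "prob_space M"
    and "Ft > 0" and "\<sigma>t > 0" and "h > 0" and "\<nu> > 0" and "-1 < \<rho>" and "\<rho> < 1"
    and Z_distr: "distributed M lborel Z (normal_density 0 (sqrt h))"
    and I_meas: "I \<in> borel_measurable M" and I_pos: "\<forall>x\<in>space M. I x > 0"
    and F_meas: "F \<in> borel_measurable M" and F_nonneg: "\<forall>x\<in>space M. F x \<ge> 0"
    and cond_law:
      "\<forall>y>0. AE x in M.
         nn_cond_exp M
           (vimage_algebra (space M)
              (\<lambda>w. (\<sigma>t * exp (\<nu> * Z w - \<nu>\<^sup>2 * h / 2), I w)) borel)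
           (indicator {w \<in> space M. F w \<ge> y}) x
         = ennreal (P_chi2
             ((Ft + \<rho> / \<nu> * (\<sigma>t * exp (\<nu> * Z x - \<nu>\<^sup>2 * h / 2) - \<sigma>t))\<^sup>2
                / ((sqrt (1 - \<rho>\<^sup>2))\<^sup>2 * \<sigma>t\<^sup>2 * h * I x))
             1
             (y\<^sup>2 / ((sqrt (1 - \<rho>\<^sup>2))\<^sup>2 * \<sigma>t\<^sup>2 * h * I x)))"
  shows "(AE x in M.
            nn_cond_exp M
              (vimage_algebra (space M)
                 (\<lambda>w. (\<sigma>t * exp (\<nu> * Z w - \<nu>\<^sup>2 * h / 2), I w)) borel)
              (\<lambda>w. ennreal (F w)) x
            = ennreal \<bar>Ft + \<rho> / \<nu> * (\<sigma>t * exp (\<nu> * Z x - \<nu>\<^sup>2 * h / 2) - \<sigma>t)\<bar>)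
         \<and> (\<integral>\<^sup>+ x. ennreal (F x) \<partial>M) \<ge> ennreal Ft"
proof -
  interpret prob_space M by fact
  note [measurable] = I_meas F_meas
  have [measurable]: "Z \<in> borel_measurable M"
    using distributed_measurable[OF Z_distr] by simp
  define X where "X = (\<lambda>w. exp (\<nu> * Z w - \<nu>\<^sup>2 * h / 2))"
  define G where "G = vimage_algebra (space M) (\<lambda>w. (\<sigma>t * X w, I w)) borel"
  define b where "b = \<rho> * \<sigma>t / \<nu>"
  define a where "a = (\<lambda>x. (Ft - b) + b * X x)"
  define V where "V = (\<lambda>x. (sqrt (1 - \<rho>\<^sup>2))\<^sup>2 * \<sigma>t\<^sup>2 * h * I x)"
  have [measurable]: "X \<in> borel_measurable M" "V \<in> borel_measurable M"
    unfolding X_def V_def by measurable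
  interpret finite_measure_subalgebra M G
    by unfold_locales (unfold G_def, rule subalgebra_vimage_algebra, measurable)
  have "(\<lambda>p. Ft - b + b / \<sigma>t * fst p) \<in> borel_measurable (borel :: (real \<times> real) measure)"
    by (simp only: borel_prod[symmetric]) measurable
  from measurable_vimage_algebra_comp[OF _ this, of "\<lambda>w. (\<sigma>t * X w, I w)" "space M"]
  have [measurable]: "a \<in> borel_measurable G"
    using \<open>\<sigma>t > 0\<close> by (simp add: G_def a_def)
  have "1 - \<rho>\<^sup>2 > 0"
    using \<open>-1 < \<rho>\<close> \<open>\<rho> < 1\<close> by (simp add: abs_square_less_1)
  then have V_pos: "V x > 0" if "x \<in> space M" for x
    using I_pos that \<open>\<sigma>t > 0\<close> \<open>h > 0\<close> by (simp add: V_def)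
  have a_eq: "a x = Ft + \<rho> / \<nu> * (\<sigma>t * exp (\<nu> * Z x - \<nu>\<^sup>2 * h / 2) - \<sigma>t)" for x
    by (simp add: a_def b_def X_def algebra_simps diff_divide_distrib)
  have cond_mean: "AE x in M. nn_cond_exp M G (\<lambda>w. ennreal (F w)) x = ennreal \<bar>a x\<bar>"
  proof (rule nn_cond_exp_eq_abs_if_chi2_one_tail[of F a V])
    show "AE x in M. nn_cond_exp M G (indicator {x \<in> space M. y \<le> F x}) x
        = ennreal (P_chi2 ((a x)\<^sup>2 / V x) 1 (y\<^sup>2 / V x))" if "y > 0" for y
      using cond_law that unfolding G_def V_def X_def a_eq by blast
  qed (use F_nonneg V_pos in auto)
  have "(\<integral>\<^sup>+ x. X x \<partial>M) = 1"
    using nn_integral_exp_normal_eq_1[OF Z_distr, of \<nu>] \<open>h > 0\<close> by (simp add: X_def)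
  from nn_integral_abs_affine_ge[OF _ _ this, of "Ft - b" b]
  have "ennreal Ft \<le> (\<integral>\<^sup>+ x. ennreal \<bar>a x\<bar> \<partial>M)"
    by (simp add: a_def X_def)
  also have "\<dots> = (\<integral>\<^sup>+ x. nn_cond_exp M G (\<lambda>w. ennreal (F w)) x \<partial>M)"
    using cond_mean by (intro nn_integral_cong_AE) auto
  also have "\<dots> = (\<integral>\<^sup>+ x. ennreal (F x) \<partial>M)"
    using nn_cond_exp_intg[of "\<lambda>_. 1" "\<lambda>w. ennreal (F w)"] by simp
  finally show ?thesis
    using cond_mean by (simp add: G_def X_def a_eq)
qed

end
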